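(* For every integer $d\ge2$, the degree map $\deg:[\mathbf{P}^1,\mathbf{P}^d]^{\mathrm{N}}\to\mathbf{N}$ is a bijection.
   Context: Let $k$ be a field and $d\ge2$. For $n\ge0$ and a $k$-algebra $R$, $\mathcal{F}^d_n(R)$ is the set of pairs $(A,B)$ where $A\in R[X]$ is monic of degree $n$ and $B=(B_1,\dots,B_d)$ is a $d$-tuple of polynomials of degree $<n$ such that $A,B_1,\dots,B_d$ generate the unit ideal of $R[X]$. Pointed scheme morphisms $\mathbf{P}^1_k\to\mathbf{P}^d_k$ (base points $\infty=[1:0]$ and $[1:0:\dots:0]$) correspond to pairs ($n$, element of $\mathcal{F}^d_n(k)$), $n$ being the degree; pointed naive homotopies $\mathbf{P}^1\times\mathbf{A}^1\to\mathbf{P}^d$ correspond to elements of $\mathcal{F}^d_n(k[T])$, with source and target obtained by evaluating at $T=0$ and $T=1$. $[\mathbf{P}^1,\mathbf{P}^d]^{\mathrm{N}}$ is the set of pointed morphisms modulo the equivalence relation generated by pointed naive homotopies. *)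

theory Defs
  imports "HOL-Computational_Algebra.Polynomial"
begin

definition gen_unit_ideal :: "'b::comm_ring_1 poly \<Rightarrow> 'b poly list \<Rightarrow> bool" where
  "gen_unit_ideal A B \<longleftrightarrow>
     (\<exists>U V. length V = length B \<and> U * A + (\<Sum>i<length B. V ! i * B ! i) = 1)"

text \<open>F^d_n(R): A monic of degree n, B a d-tuple of polynomials of degree < n
  (for n = 0 this forces B_i = 0), generating the unit ideal.\<close>
definition F_dn :: "nat \<Rightarrow> nat \<Rightarrow> ('b::comm_ring_1 poly \<times> 'b poly list) set" where
  "F_dn d n = {(A, B). degree A = n \<and> lead_coeff A = 1 \<and> length B = d \<and>
      (\<forall>b\<in>set B. b = 0 \<or> degree b < n) \<and> gen_unit_ideal A B}"

text \<open>Pointed morphisms P^1 -> P^d over k: pairs (degree n, element of F^d_n(k)).\<close>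
definition pointed_morphisms :: "nat \<Rightarrow> (nat \<times> ('a::field poly \<times> 'a poly list)) set" where
  "pointed_morphisms d = {(n, AB). AB \<in> F_dn d n}"

text \<open>k[T][X] is modelled as  a poly poly (outer variable X, coefficients in k[T]);
  evaluation at T = t.\<close>
definition eval_T :: "'a::comm_ring_1 \<Rightarrow> 'a poly poly \<Rightarrow> 'a poly" where
  "eval_T t P = map_poly (\<lambda>c. poly c t) P"

definition eval_pair :: "'a::comm_ring_1 \<Rightarrow> 'a poly poly \<times> 'a poly poly list \<Rightarrow> 'a poly \<times> 'a poly list" where
  "eval_pair t h = (eval_T t (fst h), map (eval_T t) (snd h))"

definition naive_htpy :: "nat \<Rightarrow> nat \<times> ('a::field poly \<times> 'a poly list) \<Rightarrow> nat \<times> ('a poly \<times> 'a poly list) \<Rightarrow> bool" where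
  "naive_htpy d x y \<longleftrightarrow>
     (\<exists>n h. h \<in> F_dn d n \<and> x = (n, eval_pair 0 h) \<and> y = (n, eval_pair 1 h))"

definition naive_rel :: "nat \<Rightarrow> ((nat \<times> ('a::field poly \<times> 'a poly list)) \<times> (nat \<times> ('a poly \<times> 'a poly list))) set" where
  "naive_rel d = {(x, y). x \<in> pointed_morphisms d \<and> y \<in> pointed_morphisms d \<and> equivclp (naive_htpy d) x y}"

definition naive_classes :: "nat \<Rightarrow> (nat \<times> ('a::field poly \<times> 'a poly list)) set set" where
  "naive_classes d = pointed_morphisms d // naive_rel d"

definition deg_class :: "(nat \<times> ('a poly \<times> 'a poly list)) set \<Rightarrow> nat" where
  "deg_class C = the_elem (fst ` C)"

end

theory Submission
  imports Defs
begin

text \<open>Naive homotopies preserve the degree, so the point is to connect any two pointed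
  morphisms of the same degree n. A straight line t \<mapsto> f + t (g - f) is a naive homotopy as
  soon as it stays unimodular over k[T]. This is the case for the elementary move
  B_i \<mapsto> B_i + C B_j + D A (i \<noteq> j), which along the line is again such a move, with
  multipliers T C and T D; and for replacing A by any other monic polynomial of degree n once
  some B_j = 1. Euclid's algorithm performed with elementary moves concentrates B in a single
  entry b, coprime to A; a second entry, available because d \<ge> 2, turns b into 1, after which A
  moves to X^n. So every morphism of degree n \<ge> 1 is naively homotopic to
  (X^n, (1, 0, \<dots>, 0)), and in degree 0 there is only the constant morphism.\<close>

lemma map_poly_add_hom:
  assumes "f 0 = 0" "\<And>a b. f (a + b) = f a + f b"
  shows "map_poly f (p + q) = map_poly f p + map_poly f q"
  by (intro poly_eqI) (simp add: coeff_map_poly assms)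

lemma map_poly_sum_hom:
  assumes "f 0 = 0" "\<And>a b. f (a + b) = f a + f b"
  shows "map_poly f (\<Sum>i\<in>S. g i) = (\<Sum>i\<in>S. map_poly f (g i))"
proof (cases "finite S")
  case True
  then show ?thesis
    by (induction S rule: finite_induct) (simp_all add: map_poly_add_hom[OF assms])
qed simp

lemma map_poly_mult_hom:
  fixes f :: "'a::comm_ring_1 \<Rightarrow> 'b::comm_ring_1"
  assumes f0: "f 0 = 0" and f_add: "\<And>a b. f (a + b) = f a + f b"
    and f_mult: "\<And>a b. f (a * b) = f a * f b"
  shows "map_poly f (p * q) = map_poly f p * map_poly f q"
proof (induction p)
  case (pCons a p)
  have "map_poly f (pCons a p * q) = map_poly f (smult a q + pCons 0 (p * q))"
    by simp
  also have "\<dots> = smult (f a) (map_poly f q) + pCons 0 (map_poly f p * map_poly f q)"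
    by (simp add: map_poly_add_hom[OF f0 f_add] map_poly_smult[of f, OF f0 f_mult]
        map_poly_pCons[of f, OF f0] f0 pCons.IH)
  also have "\<dots> = map_poly f (pCons a p) * map_poly f q"
    by (simp add: map_poly_pCons[of f, OF f0])
  finally show ?case .
qed simp

lemma monic_of_degreeI:
  fixes p :: "'a::comm_ring_1 poly"
  assumes "coeff p n = 1" and "\<And>k. n < k \<Longrightarrow> coeff p k = 0"
  shows "degree p = n" and "lead_coeff p = 1"
proof -
  have "degree p \<le> n"
    using assms(2) by (intro degree_le) auto
  moreover have "n \<le> degree p"
    using assms(1) by (intro le_degree) simp
  ultimately show "degree p = n" by simp
  with assms(1) show "lead_coeff p = 1" by simp
qed

definition degree_below :: "nat \<Rightarrow> 'a::zero poly \<Rightarrow> bool" where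
  "degree_below n p \<longleftrightarrow> (\<forall>k\<ge>n. coeff p k = 0)"

lemma degree_below_iff: "degree_below n p \<longleftrightarrow> p = 0 \<or> degree p < n"
  unfolding degree_below_def
  by (metis coeff_0 coeff_eq_0 le_less_trans leading_coeff_0_iff not_le)

lemma degree_below_add: "degree_below n p \<Longrightarrow> degree_below n q \<Longrightarrow> degree_below n (p + q)"
  and degree_below_diff:
    "degree_below n p \<Longrightarrow> degree_below n q \<Longrightarrow> degree_below n (p - (q :: 'a::ab_group_add poly))"
  and degree_below_uminus: "degree_below n p \<Longrightarrow> degree_below n (- (p :: 'a::ab_group_add poly))"
  by (simp_all add: degree_below_def)

lemma degree_below_1: "0 < n \<Longrightarrow> degree_below n 1"
  by (simp add: degree_below_iff)

lemma degree_below_map_poly: "f 0 = 0 \<Longrightarrow> degree_below n p \<Longrightarrow> degree_below n (map_poly f p)"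
  by (simp add: degree_below_def coeff_map_poly)

lemma degree_below_mod:
  fixes x y :: "'a::field poly"
  assumes "degree_below n x" and "degree_below n y"
  shows "degree_below n (x mod y)"
  using assms degree_mod_less[of y x] by (cases "y = 0") (auto simp: degree_below_iff)

lemma F_dn_iff:
  "(A, B) \<in> F_dn d n \<longleftrightarrow> degree A = n \<and> lead_coeff A = 1 \<and> length B = d \<and>
     (\<forall>b\<in>set B. degree_below n b) \<and> gen_unit_ideal A B"
  by (simp add: F_dn_def degree_below_iff)

lemma gen_unit_ideal_unit_entry:
  fixes B :: "'a::comm_ring_1 poly list"
  assumes "j < length B" and "B ! j = 1"
  shows "gen_unit_ideal A B"
proof -
  define V :: "'a poly list" where "V = (replicate (length B) 0)[j := 1]"
  have "(\<Sum>i<length B. V ! i * B ! i) = (\<Sum>i<length B. if i = j then 1 else 0)"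
    using assms by (intro sum.cong) (auto simp: V_def)
  also have "\<dots> = 1"
    using assms(1) by simp
  finally show ?thesis
    unfolding gen_unit_ideal_def by (intro exI[of _ 0] exI[of _ V]) (simp add: V_def)
qed

lemma F_dn_0: "F_dn d 0 = {(1, replicate d 0)}"
proof (intro set_eqI iffI)
  fix AB :: "'a poly \<times> 'a poly list"
  assume "AB \<in> F_dn d 0"
  then obtain A B where AB: "AB = (A, B)" and F: "(A, B) \<in> F_dn d 0"
    by (cases AB) auto
  then have "A = 1"
    by (metis F_dn_iff degree_eq_zeroE lead_coeff_pCons(2) one_pCons)
  moreover have "B = replicate d 0"
    using F by (auto simp: F_dn_iff degree_below_iff intro!: replicate_eqI)
  ultimately show "AB \<in> {(1, replicate d 0)}"
    using AB by simp
next
  fix AB :: "'a poly \<times> 'a poly list"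
  assume "AB \<in> {(1, replicate d 0)}"
  moreover have "gen_unit_ideal (1 :: 'a poly) (replicate d 0)"
    unfolding gen_unit_ideal_def by (intro exI[of _ 1] exI[of _ "replicate d 0"]) simp
  ultimately show "AB \<in> F_dn d 0"
    by (simp add: F_dn_iff degree_below_def)
qed

lemma gen_unit_ideal_single_entry:
  fixes A :: "'a::comm_ring_1 poly"
  assumes "gen_unit_ideal A ((replicate d 0)[0 := b])" and "0 < d"
  shows "\<exists>U V. V * b + U * A = 1"
proof -
  from assms(1) obtain U V where "U * A + (\<Sum>l<d. V ! l * (replicate d 0)[0 := b] ! l) = 1"
    by (auto simp: gen_unit_ideal_def)
  moreover have "(\<Sum>l<d. V ! l * (replicate d 0)[0 := b] ! l) = V ! 0 * b"
    using assms(2) by (simp add: nth_list_update sum.remove[of _ 0])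
  ultimately show ?thesis
    by (metis add.commute)
qed

lemma gen_unit_ideal_add_multiple:
  fixes A :: "'a::comm_ring_1 poly"
  assumes unit: "gen_unit_ideal A B" and ij: "i < length B" "j < length B" "i \<noteq> j"
  shows "gen_unit_ideal A (B[i := B ! i + (C * B ! j + D * A)])"
proof -
  from unit obtain U V where V: "length V = length B"
    and UV: "U * A + (\<Sum>l<length B. V ! l * B ! l) = 1"
    unfolding gen_unit_ideal_def by blast
  define B' where "B' = B[i := B ! i + (C * B ! j + D * A)]"
  define V' where "V' = V[j := V ! j - V ! i * C]"
  have "V' ! l * B' ! l = V ! l * B ! l + (if l = i then V ! i * (C * B ! j + D * A) else 0)
      - (if l = j then V ! i * C * B ! j else 0)" if "l < length B" for l
    using that ij V by (auto simp: V'_def B'_def algebra_simps)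
  then have "(\<Sum>l<length B. V' ! l * B' ! l) =
      (\<Sum>l<length B. V ! l * B ! l) + V ! i * (C * B ! j + D * A) - V ! i * C * B ! j"
    using ij by (simp add: sum.distrib sum_subtractf)
  then have "(U - V ! i * D) * A + (\<Sum>l<length B'. V' ! l * B' ! l) = 1"
    using UV by (simp add: B'_def algebra_simps)
  then show ?thesis
    unfolding gen_unit_ideal_def B'_def using V
    by (intro exI[of _ "U - V ! i * D"] exI[of _ V']) (simp add: V'_def B'_def)
qed

lemma gen_unit_ideal_map_poly:
  fixes f :: "'a::comm_ring_1 \<Rightarrow> 'b::comm_ring_1"
  assumes f0: "f 0 = 0" and f1: "f 1 = 1" and f_add: "\<And>a b. f (a + b) = f a + f b"
    and f_mult: "\<And>a b. f (a * b) = f a * f b"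
    and unit: "gen_unit_ideal A B"
  shows "gen_unit_ideal (map_poly f A) (map (map_poly f) B)"
proof -
  note hom = map_poly_add_hom[OF f0 f_add] map_poly_sum_hom[OF f0 f_add]
    map_poly_mult_hom[OF f0 f_add f_mult]
  from unit obtain U V where V: "length V = length B"
    and "U * A + (\<Sum>l<length B. V ! l * B ! l) = 1"
    unfolding gen_unit_ideal_def by blast
  then have "map_poly f (U * A + (\<Sum>l<length B. V ! l * B ! l)) = 1"
    using f1 by simp
  then have "map_poly f U * map_poly f A +
      (\<Sum>l<length B. map (map_poly f) V ! l * map (map_poly f) B ! l) = 1"
    using V by (simp add: hom)
  then show ?thesis
    unfolding gen_unit_ideal_def using V
    by (intro exI[of _ "map_poly f U"] exI[of _ "map (map_poly f) V"]) simp
qed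

lemma F_dn_map_poly:
  fixes f :: "'a::comm_ring_1 \<Rightarrow> 'b::comm_ring_1"
  assumes f0: "f 0 = 0" and f1: "f 1 = 1" and f_add: "\<And>a b. f (a + b) = f a + f b"
    and f_mult: "\<And>a b. f (a * b) = f a * f b"
    and F: "(A, B) \<in> F_dn d n"
  shows "(map_poly f A, map (map_poly f) B) \<in> F_dn d n"
proof -
  from F have A: "degree A = n" "coeff A n = 1"
    by (auto simp: F_dn_iff)
  have "degree (map_poly f A) = n" "lead_coeff (map_poly f A) = 1"
    by (rule monic_of_degreeI[where n = n]; use A f0 f1 in \<open>simp add: coeff_map_poly coeff_eq_0\<close>)+
  then show ?thesis
    using F gen_unit_ideal_map_poly[OF f0 f1 f_add f_mult] degree_below_map_poly[of f, OF f0]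
    by (auto simp: F_dn_iff)
qed

lemma eval_pair_F_dn: "h \<in> F_dn d n \<Longrightarrow> eval_pair t h \<in> F_dn d n"
  unfolding eval_pair_def eval_T_def
  by (cases h) (simp add: F_dn_map_poly)

definition const_T :: "'a::comm_ring_1 poly \<Rightarrow> 'a poly poly" where
  "const_T = map_poly (\<lambda>c. [:c:])"

lemma coeff_const_T: "coeff (const_T p) k = [:coeff p k:]"
  by (simp add: const_T_def coeff_map_poly)

lemma const_T_0 [simp]: "const_T 0 = 0"
  and const_T_1 [simp]: "const_T 1 = 1"
  and const_T_add: "const_T (p + q) = const_T p + const_T q"
  and const_T_mult: "const_T (p * q) = const_T p * const_T q"
  and gen_unit_ideal_const_T: "gen_unit_ideal A B \<Longrightarrow> gen_unit_ideal (const_T A) (map const_T B)"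
  unfolding const_T_def
  by (simp_all add: map_poly_add_hom map_poly_mult_hom gen_unit_ideal_map_poly)

definition segment :: "'a::comm_ring_1 poly \<Rightarrow> 'a poly \<Rightarrow> 'a poly poly" where
  "segment p q = const_T p + [:[:0, 1:]:] * const_T (q - p)"

lemma coeff_segment: "coeff (segment p q) k = [:coeff p k, coeff q k - coeff p k:]"
  by (simp add: segment_def coeff_const_T)

lemma eval_T_segment: "eval_T t (segment p q) = p + smult t (q - p)"
  by (rule poly_eqI) (simp add: eval_T_def coeff_map_poly coeff_segment algebra_simps)

lemma segment_same [simp]: "segment p p = const_T p"
  by (simp add: segment_def)

lemma naive_htpy_segmentI:
  fixes A A' :: "'a::field poly"
  assumes F: "(A, B) \<in> F_dn d n" and A': "degree A' = n" "lead_coeff A' = 1"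
    and B': "length B' = d" "\<forall>b\<in>set B'. degree_below n b"
    and unit: "gen_unit_ideal (segment A A') (map2 segment B B')"
  shows "naive_htpy d (n, (A, B)) (n, (A', B'))"
proof -
  from F have A: "degree A = n" "coeff A n = 1" and B: "length B = d" "\<forall>b\<in>set B. degree_below n b"
    by (auto simp: F_dn_iff)
  define h where "h = (segment A A', map2 segment B B')"
  have "degree (segment A A') = n" "lead_coeff (segment A A') = 1"
    by (rule monic_of_degreeI[where n = n];
        use A A' in \<open>simp add: coeff_segment coeff_eq_0 one_pCons\<close>)+
  moreover have seg: "degree_below n (segment b b')" if "degree_below n b" "degree_below n b'" for b b'
    using that by (simp add: degree_below_def coeff_segment)
  then have "\<forall>c\<in>set (map2 segment B B'). degree_below n c"
    using B B' by (auto simp: set_zip intro!: seg)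
  ultimately have "h \<in> F_dn d n"
    using B B' unit by (simp add: F_dn_iff h_def)
  moreover have "eval_pair t h = (A + smult t (A' - A), map2 (\<lambda>b b'. b + smult t (b' - b)) B B')" for t
    by (auto simp: h_def eval_pair_def eval_T_segment)
  then have "eval_pair 0 h = (A, B)" "eval_pair 1 h = (A', B')"
    using B B' by (auto intro!: nth_equalityI)
  ultimately show ?thesis
    unfolding naive_htpy_def by metis
qed

lemma naive_htpy_add_multiple:
  fixes A :: "'a::field poly"
  assumes F: "(A, B) \<in> F_dn d n" and ij: "i < d" "j < d" "i \<noteq> j"
    and small: "degree_below n (C * B ! j + D * A)"
  shows "naive_htpy d (n, (A, B)) (n, (A, B[i := B ! i + (C * B ! j + D * A)]))"
proof (rule naive_htpy_segmentI[OF F])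
  from F have B: "length B = d" "\<forall>b\<in>set B. degree_below n b" and unit: "gen_unit_ideal A B"
    by (simp_all add: F_dn_iff)
  let ?T = "[:[:0, 1:]:] :: 'a poly poly"
  have "map2 segment B (B[i := B ! i + (C * B ! j + D * A)]) =
      (map const_T B)[i := map const_T B ! i +
        ((?T * const_T C) * map const_T B ! j + (?T * const_T D) * const_T A)]"
    using B ij by (auto intro!: nth_equalityI
        simp: nth_list_update segment_def const_T_add const_T_mult smult_add_right algebra_simps)
  moreover have "gen_unit_ideal (const_T A) (map const_T B)"
    using unit by (rule gen_unit_ideal_const_T)
  ultimately show "gen_unit_ideal (segment A A) (map2 segment B (B[i := B ! i + (C * B ! j + D * A)]))"
    using gen_unit_ideal_add_multiple[of "const_T A" "map const_T B" i j "?T * const_T C" "?T * const_T D"]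
      B ij by simp
  show "\<forall>b\<in>set (B[i := B ! i + (C * B ! j + D * A)]). degree_below n b"
    using B ij small by (auto dest!: set_update_subset_insert[THEN subsetD] intro: degree_below_add)
qed (use F in \<open>auto simp: F_dn_iff\<close>)

lemma naive_htpy_change_monic:
  fixes A A' :: "'a::field poly"
  assumes F: "(A, B) \<in> F_dn d n" and j: "j < d" "B ! j = 1"
    and A': "degree A' = n" "lead_coeff A' = 1"
  shows "naive_htpy d (n, (A, B)) (n, (A', B))"
proof (rule naive_htpy_segmentI[OF F A'])
  have "map2 segment B B = map const_T B"
    by (induction B) auto
  then show "gen_unit_ideal (segment A A') (map2 segment B B)"
    using F j by (intro gen_unit_ideal_unit_entry[of j]) (simp_all add: F_dn_iff)
qed (use F in \<open>auto simp: F_dn_iff\<close>)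

abbreviation naive_homotopic ::
    "nat \<Rightarrow> nat \<times> ('a::field poly \<times> 'a poly list) \<Rightarrow> nat \<times> ('a poly \<times> 'a poly list) \<Rightarrow> bool" where
  "naive_homotopic d \<equiv> equivclp (naive_htpy d)"

lemma naive_htpy_pointed:
  "naive_htpy d x y \<Longrightarrow> x \<in> pointed_morphisms d \<and> y \<in> pointed_morphisms d"
  unfolding naive_htpy_def pointed_morphisms_def by (auto intro: eval_pair_F_dn)

lemma naive_homotopic_pointed:
  assumes "naive_homotopic d x y" and "x \<in> pointed_morphisms d"
  shows "y \<in> pointed_morphisms d"
  using assms by (induction rule: equivclp_induct) (auto dest: naive_htpy_pointed)

lemma naive_homotopic_F_dn:
  "naive_homotopic d (n, AB) (m, AB') \<Longrightarrow> AB \<in> F_dn d n \<Longrightarrow> AB' \<in> F_dn d m"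
  using naive_homotopic_pointed[of d "(n, AB)" "(m, AB')"] by (simp add: pointed_morphisms_def)

lemma naive_htpy_F_dn: "naive_htpy d x (n, AB) \<Longrightarrow> AB \<in> F_dn d n"
  using naive_htpy_pointed by (fastforce simp: pointed_morphisms_def)

lemma naive_homotopic_degree: "naive_homotopic d x y \<Longrightarrow> fst x = fst y"
  by (induction rule: equivclp_induct) (auto simp: naive_htpy_def)

lemma naive_homotopic_move_entry:
  fixes A :: "'a::field poly"
  assumes F: "(A, B) \<in> F_dn d n" and ij: "i < d" "j < d" "i \<noteq> j" and zero: "B ! i = 0"
  shows "naive_homotopic d (n, (A, B)) (n, (A, B[i := B ! j, j := 0]))"
proof -
  from F ij have B: "length B = d" and small: "degree_below n (B ! j)"
    by (auto simp: F_dn_iff)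
  have step1: "naive_htpy d (n, (A, B)) (n, (A, B[i := B ! j]))"
    using naive_htpy_add_multiple[OF F ij, of 1 0] small zero by simp
  then have F1: "(A, B[i := B ! j]) \<in> F_dn d n"
    by (rule naive_htpy_F_dn)
  have "naive_htpy d (n, (A, B[i := B ! j])) (n, (A, B[i := B ! j, j := 0]))"
    using naive_htpy_add_multiple[OF F1 ij(2,1) ij(3)[symmetric], of "-1" 0] small B ij
    by (simp add: degree_below_uminus)
  with step1 show ?thesis
    by (blast intro: equivclp_trans)
qed

lemma naive_htpy_mod_entry:
  fixes A :: "'a::field poly"
  assumes F: "(A, B) \<in> F_dn d n" and ij: "i < d" "j < d" "i \<noteq> j"
  shows "naive_htpy d (n, (A, B)) (n, (A, B[i := B ! i mod B ! j]))"
proof -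
  from F ij have small: "degree_below n (B ! i)" "degree_below n (B ! j)"
    by (auto simp: F_dn_iff)
  have r: "- (B ! i div B ! j) * B ! j + 0 * A = B ! i mod B ! j - B ! i"
    by (simp add: minus_div_mult_eq_mod[symmetric])
  have "degree_below n (- (B ! i div B ! j) * B ! j + 0 * A)"
    unfolding r using degree_below_mod[OF small] small(1) by (rule degree_below_diff)
  then have "naive_htpy d (n, (A, B))
      (n, (A, B[i := B ! i + (- (B ! i div B ! j) * B ! j + 0 * A)]))"
    by (rule naive_htpy_add_multiple[OF F ij])
  then show ?thesis
    unfolding r by simp
qed

lemma naive_homotopic_euclid:
  fixes A :: "'a::field poly"
  assumes "(A, B) \<in> F_dn d n" and "i < d" "j < d" "i \<noteq> j"
  shows "\<exists>g. naive_homotopic d (n, (A, B)) (n, (A, B[i := g, j := 0]))"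
  using assms
proof (induction "euclidean_size (B ! j)" arbitrary: B i j rule: less_induct)
  case less
  then have B: "length B = d"
    by (simp add: F_dn_iff)
  show ?case
  proof (cases "B ! j = 0")
    case True
    then have "B[i := B ! i, j := 0] = B"
      by (metis list_update_id)
    then show ?thesis
      by (metis equivclp_refl)
  next
    case False
    define B1 where "B1 = B[i := B ! i mod B ! j]"
    have htpy: "naive_htpy d (n, (A, B)) (n, (A, B1))"
      unfolding B1_def using less.prems by (rule naive_htpy_mod_entry)
    then have F1: "(A, B1) \<in> F_dn d n"
      by (rule naive_htpy_F_dn)
    from htpy have step1: "naive_homotopic d (n, (A, B)) (n, (A, B1))" ..
    have "euclidean_size (B1 ! i) < euclidean_size (B ! j)"
      using less.prems B False by (simp add: B1_def mod_size_less)
    then obtain g where step2: "naive_homotopic d (n, (A, B1)) (n, (A, B1[j := g, i := 0]))"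
      using less.hyps[OF _ F1 less.prems(3,2)] less.prems(4) by metis
    define B2 where "B2 = B1[j := g, i := 0]"
    have "(A, B2) \<in> F_dn d n"
      using step2 F1 unfolding B2_def by (rule naive_homotopic_F_dn)
    then have step3: "naive_homotopic d (n, (A, B2)) (n, (A, B2[i := B2 ! j, j := 0]))"
      using less.prems B by (intro naive_homotopic_move_entry) (simp_all add: B2_def B1_def)
    have "B2[i := B2 ! j, j := 0] = B[i := g, j := 0]"
      using less.prems B by (auto simp: B2_def B1_def list_update_swap)
    with step1 step2 step3 show ?thesis
      unfolding B2_def by (metis equivclp_trans)
  qed
qed

lemma naive_homotopic_clear_entries:
  fixes A :: "'a::field poly"
  assumes F: "(A, B) \<in> F_dn d n" and k: "k < d"
  shows "\<exists>B'. naive_homotopic d (n, (A, B)) (n, (A, B')) \<and> (\<forall>l\<in>{1..k}. B' ! l = 0)"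
  using k
proof (induction k)
  case (Suc k)
  then obtain B' where step1: "naive_homotopic d (n, (A, B)) (n, (A, B'))"
    and zero: "\<forall>l\<in>{1..k}. B' ! l = 0"
    by auto
  have F': "(A, B') \<in> F_dn d n"
    using step1 F by (rule naive_homotopic_F_dn)
  then obtain g where step2: "naive_homotopic d (n, (A, B')) (n, (A, B'[0 := g, Suc k := 0]))"
    using naive_homotopic_euclid[OF F', of 0 "Suc k"] Suc.prems by auto
  moreover have "\<forall>l\<in>{1..Suc k}. B'[0 := g, Suc k := 0] ! l = 0"
    using zero F' Suc.prems by (auto simp: F_dn_iff nth_list_update le_Suc_eq)
  ultimately show ?case
    using step1 by (blast intro: equivclp_trans)
qed (auto intro!: exI[of _ B])

definition canonical_morphism :: "nat \<Rightarrow> nat \<Rightarrow> nat \<times> ('a::field poly \<times> 'a poly list)" where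
  "canonical_morphism d n =
     (n, if n = 0 then (1, replicate d 0) else (monom 1 n, (replicate d 0)[0 := 1]))"

lemma canonical_morphism_pointed:
  assumes "0 < d"
  shows "canonical_morphism d n \<in> pointed_morphisms d"
proof (cases "n = 0")
  case False
  have "gen_unit_ideal (monom 1 n) ((replicate d 0)[0 := 1] :: 'a poly list)"
    using assms by (intro gen_unit_ideal_unit_entry[of 0]) simp_all
  moreover have "\<forall>b\<in>set ((replicate d 0)[0 := 1] :: 'a poly list). degree_below n b"
    using False by (auto dest!: set_update_subset_insert[THEN subsetD] simp: degree_below_iff)
  ultimately show ?thesis
    using False by (simp add: canonical_morphism_def pointed_morphisms_def F_dn_iff degree_monom_eq)
qed (simp add: canonical_morphism_def pointed_morphisms_def F_dn_0)

lemma naive_homotopic_canonical_single_entry: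
  fixes A :: "'a::field poly"
  assumes F: "(A, (replicate d 0)[0 := b]) \<in> F_dn d n" and d: "2 \<le> d" and n: "0 < n"
  shows "naive_homotopic d (n, (A, (replicate d 0)[0 := b])) (canonical_morphism d n)"
proof -
  let ?E = "\<lambda>b0 b1. (replicate d 0)[0 := b0, 1 := b1] :: 'a poly list"
  have E0: "?E c 0 = (replicate d 0)[0 := c]" for c
    using d by (auto simp: nth_list_update intro!: nth_equalityI)
  obtain U V where UV: "V * b + U * A = 1"
    using F d gen_unit_ideal_single_entry[of A d b] by (auto simp: F_dn_iff)
  have "degree_below n b"
    using F d by (auto simp: F_dn_iff set_update_memI)
  then have small: "degree_below n 1" "degree_below n (1 - b)"
    using n by (simp_all add: degree_below_1 degree_below_diff)
  have F0: "(A, ?E b 0) \<in> F_dn d n"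
    using F by (simp only: E0)
  have h1: "naive_htpy d (n, (A, ?E b 0)) (n, (A, ?E b 1))"
    using naive_htpy_add_multiple[OF F0, of 1 0 V U] d small UV by simp
  have h2: "naive_htpy d (n, (A, ?E b 1)) (n, (A, ?E 1 1))"
    using naive_htpy_add_multiple[OF naive_htpy_F_dn[OF h1], of 0 1 "1 - b" 0] d small
    by (simp add: list_update_swap)
  have h3: "naive_htpy d (n, (A, ?E 1 1)) (n, (A, ?E 1 0))"
    using naive_htpy_add_multiple[OF naive_htpy_F_dn[OF h2], of 1 0 "-1" 0] d
      degree_below_uminus[OF small(1)]
    by simp
  have h4: "naive_htpy d (n, (A, ?E 1 0)) (canonical_morphism d n)"
    using naive_htpy_change_monic[OF naive_htpy_F_dn[OF h3], of 0 "monom 1 n"] d n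
    unfolding E0 by (simp add: canonical_morphism_def degree_monom_eq)
  have "naive_homotopic d (n, (A, ?E b 0)) (n, (A, ?E b 1))"
    using h1 ..
  also have "naive_homotopic d \<dots> (n, (A, ?E 1 1))"
    using h2 ..
  also have "naive_homotopic d \<dots> (n, (A, ?E 1 0))"
    using h3 ..
  also have "naive_homotopic d \<dots> (canonical_morphism d n)"
    using h4 ..
  finally show ?thesis
    unfolding E0 .
qed

lemma naive_homotopic_canonical_pos:
  fixes A :: "'a::field poly"
  assumes F: "(A, B) \<in> F_dn d n" and d: "2 \<le> d" and n: "0 < n"
  shows "naive_homotopic d (n, (A, B)) (canonical_morphism d n)"
proof -
  obtain B' where step: "naive_homotopic d (n, (A, B)) (n, (A, B'))"
    and zero: "\<forall>l\<in>{1..d - 1}. B' ! l = 0"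
    using naive_homotopic_clear_entries[OF F, of "d - 1"] d by auto
  have F': "(A, B') \<in> F_dn d n"
    using step F by (rule naive_homotopic_F_dn)
  moreover have "B' = (replicate d 0)[0 := B' ! 0]"
    using F' zero by (intro nth_equalityI) (auto simp: F_dn_iff nth_list_update)
  ultimately have "naive_homotopic d (n, (A, B')) (canonical_morphism d n)"
    using naive_homotopic_canonical_single_entry[OF _ d n] by metis
  with step show ?thesis
    by (rule equivclp_trans)
qed

lemma naive_homotopic_canonical:
  assumes x: "x \<in> pointed_morphisms d" and d: "2 \<le> d"
  shows "naive_homotopic d x (canonical_morphism d (fst x))"
proof -
  obtain n A B where x_def: "x = (n, (A, B))" and F: "(A, B) \<in> F_dn d n"
    using x by (auto simp: pointed_morphisms_def)
  show ?thesis
  proof (cases "n = 0")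
    case True
    then show ?thesis
      using F by (simp add: x_def F_dn_0 canonical_morphism_def)
  next
    case False
    then show ?thesis
      using naive_homotopic_canonical_pos[OF F d] by (simp add: x_def)
  qed
qed

lemma naive_rel_iff_same_degree:
  assumes "2 \<le> d"
  shows "(x, y) \<in> naive_rel d \<longleftrightarrow>
    x \<in> pointed_morphisms d \<and> y \<in> pointed_morphisms d \<and> fst x = fst y"
proof
  assume "(x, y) \<in> naive_rel d"
  then show "x \<in> pointed_morphisms d \<and> y \<in> pointed_morphisms d \<and> fst x = fst y"
    by (auto simp: naive_rel_def dest: naive_homotopic_degree)
next
  assume xy: "x \<in> pointed_morphisms d \<and> y \<in> pointed_morphisms d \<and> fst x = fst y"
  then have "naive_homotopic d x y"
    using naive_homotopic_canonical[OF _ assms, of x] naive_homotopic_canonical[OF _ assms, of y]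
    by (metis equivclp_sym equivclp_trans)
  with xy show "(x, y) \<in> naive_rel d"
    by (simp add: naive_rel_def)
qed

lemma fst_image_pointed_morphisms:
  assumes "0 < d"
  shows "fst ` (pointed_morphisms d :: (nat \<times> ('a::field poly \<times> 'a poly list)) set) = UNIV"
  using canonical_morphism_pointed[OF assms]
  by (force simp: canonical_morphism_def image_iff)

lemma bij_betw_quotient_kernel:
  assumes R: "\<And>x y. (x, y) \<in> R \<longleftrightarrow> x \<in> S \<and> y \<in> S \<and> f x = f y"
  shows "bij_betw (\<lambda>C. the_elem (f ` C)) (S // R) (f ` S)"
proof -
  have R_class: "R `` {x} = {y \<in> S. f y = f x}" if "x \<in> S" for x
    using that R by auto
  have f_class: "the_elem (f ` (R `` {x})) = f x" if "x \<in> S" for x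
  proof -
    have "f ` (R `` {x}) = {f x}"
      using that R_class[OF that] by auto
    then show ?thesis
      by simp
  qed
  show ?thesis
  proof (rule bij_betw_imageI)
    show "inj_on (\<lambda>C. the_elem (f ` C)) (S // R)"
    proof (rule inj_onI)
      fix C C' assume "C \<in> S // R" "C' \<in> S // R" and "the_elem (f ` C) = the_elem (f ` C')"
      then obtain x x' where "x \<in> S" "x' \<in> S" "C = R `` {x}" "C' = R `` {x'}" "f x = f x'"
        by (auto elim!: quotientE simp: f_class)
      then show "C = C'"
        by (simp add: R_class)
    qed
    show "(\<lambda>C. the_elem (f ` C)) ` (S // R) = f ` S"
      by (auto elim!: quotientE intro!: image_eqI quotientI simp: f_class)
  qed
qed

theorem theorem4p12:
  fixes d :: nat
  assumes "2 \<le> d"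
  shows "bij_betw (deg_class :: (nat \<times> ('a::field poly \<times> 'a poly list)) set \<Rightarrow> nat)
           (naive_classes d) UNIV"
proof -
  let ?P = "pointed_morphisms d :: (nat \<times> ('a poly \<times> 'a poly list)) set"
  have "bij_betw (\<lambda>C. the_elem (fst ` C)) (?P // naive_rel d) (fst ` ?P)"
    by (rule bij_betw_quotient_kernel) (rule naive_rel_iff_same_degree[OF assms])
  moreover have "fst ` ?P = UNIV"
    using assms by (intro fst_image_pointed_morphisms) simp
  ultimately show ?thesis
    unfolding naive_classes_def deg_class_def[abs_def] by simp
qed

end
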